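(* Let $\ell,k$ be positive integers with $k\ge 2$, and let $G_{\ell,k}$ be the graph constructed as follows: take disjoint paths $x_{0,r}x_{1,r}\cdots x_{\ell,r}$ for $1\le r\le k$, identify $x_{0,1},\dots,x_{0,k}$ into a single vertex $u$, identify $x_{\ell,1},\dots,x_{\ell,k}$ into a single vertex $v$, and add the edge $uv$. For vertices $a,b\ne u$ write $a\sim_u b$ if there is a graph automorphism $\pi$ of $G_{\ell,k}$ with $\pi(u)=u$ and $\pi(a)=b$. Then the equivalence classes of $\sim_u$ are $\{x_{1,r}\}_{r=1}^k,\{x_{2,r}\}_{r=1}^k,\dots,\{x_{\ell-1,r}\}_{r=1}^k$ and $\{v\}$.
   Context: A graph automorphism is a bijection of the vertex set preserving adjacency and non-adjacency. *)

theory Defs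
  imports Main
begin

text \<open>Vertices of G_{l,k}: the identified endpoints u (GU) and v (GV), and the
  internal path vertices x_{i,r} (GX i r), 1 <= i <= l-1, 1 <= r <= k.\<close>
datatype gvert = GU | GV | GX nat nat

definition pvert :: "nat \<Rightarrow> nat \<Rightarrow> nat \<Rightarrow> gvert" where
  "pvert l i r = (if i = 0 then GU else if i = l then GV else GX i r)"

definition G_verts :: "nat \<Rightarrow> nat \<Rightarrow> gvert set" where
  "G_verts l k = {pvert l i r | i r. i \<le> l \<and> 1 \<le> r \<and> r \<le> k}"

definition G_edges :: "nat \<Rightarrow> nat \<Rightarrow> gvert set set" where
  "G_edges l k = {{GU, GV}} \<union>
     {{pvert l i r, pvert l (Suc i) r} | i r. i < l \<and> 1 \<le> r \<and> r \<le> k}"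

definition G_adj :: "nat \<Rightarrow> nat \<Rightarrow> gvert \<Rightarrow> gvert \<Rightarrow> bool" where
  "G_adj l k a b \<longleftrightarrow> {a, b} \<in> G_edges l k"

definition G_aut :: "nat \<Rightarrow> nat \<Rightarrow> (gvert \<Rightarrow> gvert) \<Rightarrow> bool" where
  "G_aut l k \<pi> \<longleftrightarrow> bij_betw \<pi> (G_verts l k) (G_verts l k) \<and>
     (\<forall>a\<in>G_verts l k. \<forall>b\<in>G_verts l k. G_adj l k a b \<longleftrightarrow> G_adj l k (\<pi> a) (\<pi> b))"

definition sim_u :: "nat \<Rightarrow> nat \<Rightarrow> gvert rel" where
  "sim_u l k = {(a, b). a \<in> G_verts l k - {GU} \<and> b \<in> G_verts l k - {GU} \<and>
     (\<exists>\<pi>. G_aut l k \<pi> \<and> \<pi> GU = GU \<and> \<pi> a = b)}"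

end

(* An automorphism fixing u also fixes v: v is a neighbour of u, and if it were sent to some
   x_{1,r} (so l >= 2), its k >= 2 neighbours x_{l-1,s} would all have to go to x_{2,r}, the only
   neighbour of x_{1,r} besides u. An automorphism fixing u and v preserves the index i of every
   vertex x_{i,r}, by induction on i: x_{i+1,r} is the neighbour of x_{i,r} other than x_{i-1,r}.
   Conversely, every permutation of the path labels 1..k is an automorphism fixing u and v, and
   the transposition of r and s moves x_{i,r} to x_{i,s}. So ~_u is the kernel of the index map on V - {u}, and its classes
   are the fibres of that map. *)

theory Submission
  imports Defs "HOL-Combinatorics.Permutations"
begin

(* The index i of x_{i,r}; for v it is l, not the graph distance 1 from u. *)
fun height :: "nat \<Rightarrow> gvert \<Rightarrow> nat" where
  "height l GU = 0"
| "height l GV = l"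
| "height l (GX i r) = i"

lemma height_pvert [simp]: "i \<le> l \<Longrightarrow> height l (pvert l i r) = i"
  by (simp add: pvert_def)

lemma pvert_eq_GU_iff [simp]: "pvert l i r = GU \<longleftrightarrow> i = 0"
  by (simp add: pvert_def)

lemma pvert_0 [simp]: "pvert l 0 r = GU"
  by (simp add: pvert_def)

lemma pvert_top [simp]: "0 < l \<Longrightarrow> pvert l l r = GV"
  by (simp add: pvert_def)

lemma pvert_inner [simp]: "0 < i \<Longrightarrow> i < l \<Longrightarrow> pvert l i r = GX i r"
  by (simp add: pvert_def)

lemma pvert_eq_GV_iff [simp]: "pvert l i r = GV \<longleftrightarrow> i \<noteq> 0 \<and> i = l"
  by (simp add: pvert_def)

lemma pvert_eq_GX_iff [simp]: "pvert l i r = GX j s \<longleftrightarrow> i \<noteq> 0 \<and> i \<noteq> l \<and> j = i \<and> s = r"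
  by (auto simp: pvert_def)

lemma pvert_in_G_verts: "i \<le> l \<Longrightarrow> 1 \<le> r \<Longrightarrow> r \<le> k \<Longrightarrow> pvert l i r \<in> G_verts l k"
  by (auto simp: G_verts_def)

lemma G_vertsE:
  assumes "x \<in> G_verts l k"
  obtains r where "x = pvert l (height l x) r" "height l x \<le> l" "1 \<le> r" "r \<le> k"
  using assms by (auto simp: G_verts_def)

lemma GU_in_G_verts: "1 \<le> k \<Longrightarrow> GU \<in> G_verts l k"
  using pvert_in_G_verts[of 0 l 1 k] by simp

lemma GV_in_G_verts: "1 \<le> l \<Longrightarrow> 1 \<le> k \<Longrightarrow> GV \<in> G_verts l k"
  using pvert_in_G_verts[of l l 1 k] by simp

lemma G_verts_minus_GU:
  assumes "1 \<le> l" "1 \<le> k"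
  shows "G_verts l k - {GU} = insert GV {GX i r | i r. 1 \<le> i \<and> i < l \<and> 1 \<le> r \<and> r \<le> k}"
proof
  show "G_verts l k - {GU} \<subseteq> insert GV {GX i r | i r. 1 \<le> i \<and> i < l \<and> 1 \<le> r \<and> r \<le> k}"
    using assms by (auto simp: G_verts_def pvert_def split: if_splits)
next
  have "GV \<in> G_verts l k"
    using GV_in_G_verts assms .
  moreover have "GX i r \<in> G_verts l k" if "1 \<le> i" "i < l" "1 \<le> r" "r \<le> k" for i r
    using pvert_in_G_verts[of i l r k] that by simp
  ultimately show "insert GV {GX i r | i r. 1 \<le> i \<and> i < l \<and> 1 \<le> r \<and> r \<le> k} \<subseteq> G_verts l k - {GU}"
    by blast
qed

lemma G_adj_sym: "G_adj l k a b \<longleftrightarrow> G_adj l k b a"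
  by (simp add: G_adj_def insert_commute)

lemma G_adj_iff: "G_adj l k a b \<longleftrightarrow> {a, b} = {GU, GV} \<or>
    (\<exists>i r. i < l \<and> 1 \<le> r \<and> r \<le> k \<and> {a, b} = {pvert l i r, pvert l (Suc i) r})"
  unfolding G_adj_def G_edges_def by blast

lemma G_adj_GU_GV: "G_adj l k GU GV"
  by (simp add: G_adj_iff)

lemma G_adj_pvert_Suc: "i < l \<Longrightarrow> 1 \<le> r \<Longrightarrow> r \<le> k \<Longrightarrow> G_adj l k (pvert l i r) (pvert l (Suc i) r)"
  by (auto simp: G_adj_iff)

lemma G_adj_GU_iff:
  assumes "1 \<le> l"
  shows "G_adj l k GU b \<longleftrightarrow> b = GV \<or> (\<exists>r. 1 \<le> r \<and> r \<le> k \<and> b = pvert l 1 r)"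
proof
  assume "G_adj l k GU b"
  then show "b = GV \<or> (\<exists>r. 1 \<le> r \<and> r \<le> k \<and> b = pvert l 1 r)"
    by (auto simp: G_adj_iff doubleton_eq_iff eq_commute[of GU])
qed (use assms G_adj_GU_GV G_adj_pvert_Suc[of 0 l] in auto)

lemma G_adj_inner_iff:
  assumes "0 < i" "i < l" "1 \<le> r" "r \<le> k"
  shows "G_adj l k (pvert l i r) b \<longleftrightarrow> b = pvert l (i - 1) r \<or> b = pvert l (Suc i) r"
proof
  assume "G_adj l k (pvert l i r) b"
  moreover have "pvert l i r = GX i r"
    using assms by simp
  ultimately show "b = pvert l (i - 1) r \<or> b = pvert l (Suc i) r"
    by (auto simp: G_adj_iff doubleton_eq_iff eq_commute[of "GX i r"])
next
  assume "b = pvert l (i - 1) r \<or> b = pvert l (Suc i) r"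
  then show "G_adj l k (pvert l i r) b"
    using assms G_adj_pvert_Suc[of "i - 1" l r k] G_adj_pvert_Suc[of i l r k] G_adj_sym
    by fastforce
qed

lemma G_aut_in: "G_aut l k \<pi> \<Longrightarrow> a \<in> G_verts l k \<Longrightarrow> \<pi> a \<in> G_verts l k"
  by (auto simp: G_aut_def bij_betw_def)

lemma G_aut_eq_iff:
  "G_aut l k \<pi> \<Longrightarrow> a \<in> G_verts l k \<Longrightarrow> b \<in> G_verts l k \<Longrightarrow> \<pi> a = \<pi> b \<longleftrightarrow> a = b"
  by (auto simp: G_aut_def bij_betw_def dest: inj_onD)

lemma G_aut_adj:
  "G_aut l k \<pi> \<Longrightarrow> a \<in> G_verts l k \<Longrightarrow> b \<in> G_verts l k \<Longrightarrow> G_adj l k a b \<Longrightarrow>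
    G_adj l k (\<pi> a) (\<pi> b)"
  by (auto simp: G_aut_def)

lemma G_aut_fixes_GV:
  assumes aut: "G_aut l k \<pi>" and fixes_GU: "\<pi> GU = GU" and "1 \<le> l" "2 \<le> k"
  shows "\<pi> GV = GV"
proof (rule ccontr)
  assume moved: "\<pi> GV \<noteq> GV"
  have GU_in: "GU \<in> G_verts l k" and GV_in: "GV \<in> G_verts l k"
    using GU_in_G_verts GV_in_G_verts assms by auto
  have "G_adj l k GU (\<pi> GV)"
    using G_aut_adj[OF aut GU_in GV_in] G_adj_GU_GV fixes_GU by simp
  then obtain r where r: "1 \<le> r" "r \<le> k" "\<pi> GV = pvert l 1 r"
    using G_adj_GU_iff \<open>1 \<le> l\<close> moved by blast
  with moved have "1 < l"
    using \<open>1 \<le> l\<close> by auto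
  have neighbours_of_GV: "\<pi> (pvert l (l - 1) s) = pvert l 2 r" if s: "1 \<le> s" "s \<le> k" for s
  proof -
    have s_in: "pvert l (l - 1) s \<in> G_verts l k"
      using pvert_in_G_verts s by simp
    have "G_adj l k (pvert l (l - 1) s) GV"
      using G_adj_pvert_Suc[of "l - 1" l s k] s \<open>1 < l\<close> by simp
    then have "G_adj l k (pvert l 1 r) (\<pi> (pvert l (l - 1) s))"
      using G_aut_adj[OF aut GV_in s_in] G_adj_sym r(3) by metis
    then have "\<pi> (pvert l (l - 1) s) = GU \<or> \<pi> (pvert l (l - 1) s) = pvert l 2 r"
      using G_adj_inner_iff[of 1 l r k] \<open>1 < l\<close> r by (simp add: numeral_2_eq_2)
    moreover have "\<pi> (pvert l (l - 1) s) \<noteq> GU"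
      using G_aut_eq_iff[OF aut s_in GU_in] fixes_GU \<open>1 < l\<close> by simp
    ultimately show ?thesis
      by blast
  qed
  have "\<pi> (pvert l (l - 1) 1) = \<pi> (pvert l (l - 1) 2)"
    using neighbours_of_GV[of 1] neighbours_of_GV[of 2] \<open>2 \<le> k\<close> by simp
  moreover have "pvert l (l - 1) s \<in> G_verts l k" if "s \<in> {1, 2}" for s
    using pvert_in_G_verts that \<open>2 \<le> k\<close> by auto
  ultimately have "pvert l (l - 1) 1 = pvert l (l - 1) 2"
    using G_aut_eq_iff[OF aut] by blast
  then show False
    using \<open>1 < l\<close> by simp
qed

lemma G_aut_height_pvert:
  assumes aut: "G_aut l k \<pi>" and fixes_GU: "\<pi> GU = GU" and fixes_GV: "\<pi> GV = GV"
  shows "i \<le> l \<Longrightarrow> 1 \<le> r \<Longrightarrow> r \<le> k \<Longrightarrow> height l (\<pi> (pvert l i r)) = i"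
proof (induction i arbitrary: r rule: less_induct)
  case (less i)
  have i_in: "pvert l i r \<in> G_verts l k"
    using less.prems pvert_in_G_verts by blast
  consider "i = 0" | "i = 1" | j where "i = Suc (Suc j)"
    by (metis One_nat_def not0_implies_Suc)
  then show ?case
  proof cases
    case 1
    then show ?thesis
      using fixes_GU by simp
  next
    case 2
    have "G_adj l k (\<pi> GU) (\<pi> (pvert l 1 r))"
      using G_aut_adj[OF aut GU_in_G_verts i_in] G_adj_pvert_Suc[of 0 l r k] less.prems 2 by simp
    then have "G_adj l k GU (\<pi> (pvert l 1 r))"
      using fixes_GU by simp
    then consider "\<pi> (pvert l 1 r) = GV" | r' where "\<pi> (pvert l 1 r) = pvert l 1 r'"
      using G_adj_GU_iff less.prems 2 by auto
    then show ?thesis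
    proof cases
      case 1
      then have "pvert l 1 r = GV"
        using G_aut_eq_iff[OF aut i_in GV_in_G_verts] fixes_GV less.prems 2 by simp
      then show ?thesis
        using 1 2 by simp
    next
      case 2
      then show ?thesis
        using \<open>i = 1\<close> less.prems by simp
    qed
  next
    case 3
    have mid_in: "pvert l (Suc j) r \<in> G_verts l k" and low_in: "pvert l j r \<in> G_verts l k"
      using less.prems 3 pvert_in_G_verts[of "Suc j" l r k] pvert_in_G_verts[of j l r k] by auto
    have "height l (\<pi> (pvert l (Suc j) r)) = Suc j"
      using less.IH[of "Suc j" r] less.prems 3 by simp
    then obtain r' where r': "1 \<le> r'" "r' \<le> k" "\<pi> (pvert l (Suc j) r) = pvert l (Suc j) r'"
      using G_vertsE[OF G_aut_in[OF aut mid_in]] by metis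
    have neighbours: "\<pi> x = pvert l j r' \<or> \<pi> x = pvert l i r'"
      if "x \<in> G_verts l k" "G_adj l k (pvert l (Suc j) r) x" for x
    proof -
      have "G_adj l k (pvert l (Suc j) r') (\<pi> x)"
        using G_aut_adj[OF aut mid_in that] r'(3) by simp
      then show ?thesis
        using G_adj_inner_iff[of "Suc j" l r' k] r' less.prems 3 by simp
    qed
    have "\<pi> (pvert l j r) = pvert l j r'"
      using neighbours[OF low_in] G_adj_inner_iff[of "Suc j" l r k] less.IH[of j r] less.prems 3
      by fastforce
    moreover have "\<pi> (pvert l i r) \<noteq> \<pi> (pvert l j r)"
      using G_aut_eq_iff[OF aut i_in low_in] height_pvert[of i l r] height_pvert[of j l r]
        less.prems 3 by force
    ultimately have "\<pi> (pvert l i r) = pvert l i r'"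
      using neighbours[OF i_in] G_adj_inner_iff[of "Suc j" l r k] less.prems 3 by force
    then show ?thesis
      using less.prems by simp
  qed
qed

lemma G_aut_height:
  assumes "G_aut l k \<pi>" "\<pi> GU = GU" "\<pi> GV = GV" "x \<in> G_verts l k"
  shows "height l (\<pi> x) = height l x"
  using assms(4) by (rule G_vertsE) (metis G_aut_height_pvert[OF assms(1-3)])

fun relabel_paths :: "(nat \<Rightarrow> nat) \<Rightarrow> gvert \<Rightarrow> gvert" where
  "relabel_paths \<sigma> GU = GU"
| "relabel_paths \<sigma> GV = GV"
| "relabel_paths \<sigma> (GX i r) = GX i (\<sigma> r)"

lemma relabel_paths_pvert [simp]: "relabel_paths \<sigma> (pvert l i r) = pvert l i (\<sigma> r)"
  by (simp add: pvert_def)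

lemma relabel_paths_relabel_paths: "relabel_paths \<tau> (relabel_paths \<sigma> a) = relabel_paths (\<tau> \<circ> \<sigma>) a"
  by (cases a) simp_all

lemma relabel_paths_id [simp]: "relabel_paths id a = a"
  by (cases a) simp_all

lemma relabel_paths_in_G_verts:
  assumes "\<sigma> ` {1..k} \<subseteq> {1..k}" "a \<in> G_verts l k"
  shows "relabel_paths \<sigma> a \<in> G_verts l k"
proof -
  obtain i r where "a = pvert l i r" "i \<le> l" "1 \<le> r" "r \<le> k"
    using assms(2) by (auto simp: G_verts_def)
  moreover have "1 \<le> \<sigma> r" "\<sigma> r \<le> k"
    using assms(1) calculation(3,4) by (auto simp: image_subset_iff)
  ultimately show ?thesis
    using pvert_in_G_verts[of i l "\<sigma> r" k] by simp
qed

lemma relabel_paths_G_edges: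
  assumes "\<sigma> ` {1..k} \<subseteq> {1..k}" "e \<in> G_edges l k"
  shows "relabel_paths \<sigma> ` e \<in> G_edges l k"
proof -
  from assms(2) consider "e = {GU, GV}"
    | i r where "i < l" "1 \<le> r" "r \<le> k" "e = {pvert l i r, pvert l (Suc i) r}"
    unfolding G_edges_def by blast
  then show ?thesis
  proof cases
    case 1
    then show ?thesis
      by (simp add: G_edges_def)
  next
    case 2
    moreover have "1 \<le> \<sigma> r" "\<sigma> r \<le> k"
      using assms(1) 2 by (auto simp: image_subset_iff)
    ultimately show ?thesis
      unfolding G_edges_def by auto
  qed
qed

lemma relabel_paths_G_adj:
  "\<sigma> ` {1..k} \<subseteq> {1..k} \<Longrightarrow> G_adj l k a b \<Longrightarrow> G_adj l k (relabel_paths \<sigma> a) (relabel_paths \<sigma> b)"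
  using relabel_paths_G_edges[of \<sigma> k "{a, b}" l] by (simp add: G_adj_def)

lemma G_aut_relabel_paths:
  assumes "\<sigma> permutes {1..k}"
  shows "G_aut l k (relabel_paths \<sigma>)"
proof -
  have into: "\<sigma> ` {1..k} \<subseteq> {1..k}" "inv \<sigma> ` {1..k} \<subseteq> {1..k}"
    using permutes_image[OF assms] permutes_image[OF permutes_inv[OF assms]] by simp_all
  have inverse: "relabel_paths (inv \<sigma>) (relabel_paths \<sigma> a) = a"
    "relabel_paths \<sigma> (relabel_paths (inv \<sigma>) a) = a" for a
    using permutes_inv_o[OF assms] by (simp_all add: relabel_paths_relabel_paths)
  have "bij_betw (relabel_paths \<sigma>) (G_verts l k) (G_verts l k)"
    by (rule bij_betw_byWitness[where f' = "relabel_paths (inv \<sigma>)"])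
      (use inverse relabel_paths_in_G_verts[OF into(1)] relabel_paths_in_G_verts[OF into(2)] in auto)
  moreover have "G_adj l k a b \<longleftrightarrow> G_adj l k (relabel_paths \<sigma> a) (relabel_paths \<sigma> b)" for a b
    using relabel_paths_G_adj[OF into(1)] relabel_paths_G_adj[OF into(2)] inverse by metis
  ultimately show ?thesis
    unfolding G_aut_def by blast
qed

lemma equiv_Restr_kernel: "equiv A (Restr (kernel f) A)"
  by (auto simp: equiv_def refl_on_def sym_def trans_def kernel_def)

lemma quotient_Restr_kernel: "A // Restr (kernel f) A = (\<lambda>c. {a \<in> A. f a = c}) ` f ` A"
proof -
  have "Restr (kernel f) A `` {x} = {a \<in> A. f a = f x}" if "x \<in> A" for x
    using that by (auto simp: kernel_def)
  then show ?thesis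
    by (simp add: quotient_def image_image UNION_singleton_eq_range)
qed

lemma sim_u_eq_Restr_kernel_height:
  assumes "1 \<le> l" "2 \<le> k"
  shows "sim_u l k = Restr (kernel (height l)) (G_verts l k - {GU})"
proof (intro equalityI subsetI)
  fix p assume "p \<in> sim_u l k"
  then obtain a \<pi> where p: "p = (a, \<pi> a)" "a \<in> G_verts l k - {GU}" "\<pi> a \<in> G_verts l k - {GU}"
    and aut: "G_aut l k \<pi>" "\<pi> GU = GU"
    unfolding sim_u_def by blast
  moreover have "\<pi> GV = GV"
    using G_aut_fixes_GV[OF aut] assms .
  ultimately show "p \<in> Restr (kernel (height l)) (G_verts l k - {GU})"
    using G_aut_height[OF aut] by (simp add: kernel_def)
next
  fix p assume "p \<in> Restr (kernel (height l)) (G_verts l k - {GU})"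
  then obtain a b where p: "p = (a, b)" "a \<in> G_verts l k - {GU}" "b \<in> G_verts l k - {GU}"
    and same_height: "height l a = height l b"
    by (auto simp: kernel_def)
  obtain r s where "a = pvert l (height l a) r" "1 \<le> r" "r \<le> k"
    and "b = pvert l (height l b) s" "1 \<le> s" "s \<le> k"
    using G_vertsE p(2,3) by (metis DiffD1)
  then have "relabel_paths (transpose r s) a = b"
    using same_height by (metis relabel_paths_pvert transpose_apply_first)
  moreover have "transpose r s permutes {1..k}"
    by (rule permutes_swap_id) (use \<open>1 \<le> r\<close> \<open>r \<le> k\<close> \<open>1 \<le> s\<close> \<open>s \<le> k\<close> in auto)
  then have "G_aut l k (relabel_paths (transpose r s))"
    by (rule G_aut_relabel_paths)
  ultimately show "p \<in> sim_u l k"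
    unfolding sim_u_def using p by force
qed

lemma height_classes:
  assumes "1 \<le> l" "1 \<le> k"
  shows "(\<lambda>c. {a \<in> G_verts l k - {GU}. height l a = c}) ` height l ` (G_verts l k - {GU}) =
    {{GX i r | r. 1 \<le> r \<and> r \<le> k} | i. 1 \<le> i \<and> i \<le> l - 1} \<union> {{GV}}"
    (is "?class ` _ = _")
proof -
  have "{i. 1 \<le> i \<and> i \<le> l - 1} \<subseteq> height l ` {GX i r | i r. 1 \<le> i \<and> i < l \<and> 1 \<le> r \<and> r \<le> k}"
    using assms by (auto intro!: image_eqI[where x = "GX _ 1"])
  then have heights: "height l ` (G_verts l k - {GU}) = insert l {i. 1 \<le> i \<and> i \<le> l - 1}"
    unfolding G_verts_minus_GU[OF assms] by auto
  have top: "?class l = {GV}"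
    unfolding G_verts_minus_GU[OF assms] by auto
  have inner: "?class i = {GX i r | r. 1 \<le> r \<and> r \<le> k}" if "i \<in> {i. 1 \<le> i \<and> i \<le> l - 1}" for i
    using that unfolding G_verts_minus_GU[OF assms] by auto
  have "?class ` {i. 1 \<le> i \<and> i \<le> l - 1} = {{GX i r | r. 1 \<le> r \<and> r \<le> k} | i. 1 \<le> i \<and> i \<le> l - 1}"
    using inner by blast
  then show ?thesis
    unfolding heights image_insert top by blast
qed

theorem proposition16:
  fixes l k :: nat
  assumes "1 \<le> l" and "2 \<le> k"
  shows "equiv (G_verts l k - {GU}) (sim_u l k) \<and>
    (G_verts l k - {GU}) // sim_u l k =
      {{GX i r | r. 1 \<le> r \<and> r \<le> k} | i. 1 \<le> i \<and> i \<le> l - 1} \<union> {{GV}}"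
proof -
  have "1 \<le> k"
    using assms(2) by simp
  then show ?thesis
    unfolding sim_u_eq_Restr_kernel_height[OF assms] quotient_Restr_kernel
      height_classes[OF assms(1) \<open>1 \<le> k\<close>]
    by (simp add: equiv_Restr_kernel)
qed

end
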